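(* Let $t\ge 1$ be an integer, let $\mathcal A$ be an alphabet, and let $\mathfrak D_t$ be the simple 2-level network $([2t,2t],[1,1])$, with an adversary able to corrupt up to $t$ of the edges outgoing from the source. Then, for every positive integer $i$, the $i$-shot capacity of $\mathfrak D_t$ (in Scenario A.1 as well as in Scenario A.2) is \[C_i(\mathfrak D_t,\mathcal A,\mathbf A_{\mathfrak D_t})=1.\]
   Context: An alphabet is a finite set $\mathcal A$ with $|\mathcal A|\ge 2$. For positive integers $a_j,b_j$, the simple 2-level network $([a_1,\dots,a_n],[b_1,\dots,b_n])$ is the directed acyclic multigraph with a source $S$, intermediate nodes $V_1,\dots,V_n$, a single terminal $T$, exactly $a_j$ parallel edges from $S$ to $V_j$ and exactly $b_j$ parallel edges from $V_j$ to $T$, and no other edges. Each edge carries one symbol of $\mathcal A$. A network code is a family $\mathcal F=\{\mathcal F_{V_j}:\mathcal A^{a_j}\to\mathcal A^{b_j}\}_j$. In one use, the source sends $x\in\mathcal A^{a_1+\dots+a_n}$ on its outgoing edges (the set $\mathcal U_S$), the adversary may replace the symbols on up to $t$ edges of $\mathcal U_S$ by arbitrary symbols, each $V_j$ applies $\mathcal F_{V_j}$ to the symbols it receives and sends the result to $T$. The fan-out set $\Omega_{\mathcal F}(x)$ is the set of all vectors $T$ can receive. For $i$ uses with the same network code, the input is $(x^1,\dots,x^i)$ and: in Scenario A.1 the adversary fixes one set $W\subseteq\mathcal U_S$ with $|W|\le t$ and in each of the $i$ rounds may alter (arbitrarily, independently per round) only symbols on edges of $W$; in Scenario A.2 the adversary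 may choose a different set of at most $t$ edges in each round, so the fan-out set is $\Omega_{\mathcal F}(x^1)\times\dots\times\Omega_{\mathcal F}(x^i)$. A nonempty code $C\subseteq(\mathcal A^{a_1+\dots+a_n})^i$ is unambiguous if distinct codewords have disjoint fan-out sets. The $i$-shot capacity $C_i$ is the maximum of $\log_{|\mathcal A|}(|C|)/i$ over all network codes and unambiguous codes $C$. *)

theory Defs
  imports Complex_Main
begin

text \<open>Simple 2-level network ([a_1..a_n],[b_1..b_n]) given by the lists as and bs
  (length as = length bs = n). A source input is a list of n blocks, block j being the
  list of symbols on the a_j parallel edges from S to V_j.\<close>

definition valid_input :: "'a set \<Rightarrow> nat list \<Rightarrow> 'a list list \<Rightarrow> bool" where
  "valid_input A as x \<longleftrightarrow> length x = length as \<and>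
     (\<forall>j<length as. length (x ! j) = as ! j \<and> set (x ! j) \<subseteq> A)"

definition source_edges :: "nat list \<Rightarrow> (nat \<times> nat) set" where
  "source_edges as = {(j, k). j < length as \<and> k < as ! j}"

definition network_code :: "'a set \<Rightarrow> nat list \<Rightarrow> nat list \<Rightarrow> (nat \<Rightarrow> 'a list \<Rightarrow> 'a list) \<Rightarrow> bool" where
  "network_code A as bs F \<longleftrightarrow> length as = length bs \<and>
     (\<forall>j<length as. \<forall>y. length y = as ! j \<and> set y \<subseteq> A \<longrightarrow>
        length (F j y) = bs ! j \<and> set (F j y) \<subseteq> A)"

definition agrees_off :: "nat list \<Rightarrow> (nat \<times> nat) set \<Rightarrow> 'a list list \<Rightarrow> 'a list list \<Rightarrow> bool" where
  "agrees_off as W x y \<longleftrightarrow> (\<forall>(j, k) \<in> source_edges as - W. y ! j ! k = x ! j ! k)"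

definition terminal_output :: "nat list \<Rightarrow> (nat \<Rightarrow> 'a list \<Rightarrow> 'a list) \<Rightarrow> 'a list list \<Rightarrow> 'a list list" where
  "terminal_output as F y = map (\<lambda>j. F j (y ! j)) [0..<length as]"

definition fanout :: "'a set \<Rightarrow> nat list \<Rightarrow> nat \<Rightarrow> (nat \<Rightarrow> 'a list \<Rightarrow> 'a list) \<Rightarrow> 'a list list \<Rightarrow> 'a list list set" where
  "fanout A as t F x = {terminal_output as F y | y W. valid_input A as y \<and>
      W \<subseteq> source_edges as \<and> card W \<le> t \<and> agrees_off as W x y}"

datatype scenario = A1 | A2

text \<open>i-shot fan-out set of (x^1,...,x^i), given as a list of length i.
  Scenario A.1: one fixed set W of at most t edges for all rounds.
  Scenario A.2: product of the one-shot fan-out sets.\<close>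
fun fanout_multi :: "scenario \<Rightarrow> 'a set \<Rightarrow> nat list \<Rightarrow> nat \<Rightarrow> (nat \<Rightarrow> 'a list \<Rightarrow> 'a list)
    \<Rightarrow> 'a list list list \<Rightarrow> 'a list list list set" where
  "fanout_multi A1 A as t F xs = {map (terminal_output as F) ys | ys W.
      length ys = length xs \<and> W \<subseteq> source_edges as \<and> card W \<le> t \<and>
      (\<forall>r<length xs. valid_input A as (ys ! r) \<and> agrees_off as W (xs ! r) (ys ! r))}"
| "fanout_multi A2 A as t F xs = {zs. length zs = length xs \<and>
      (\<forall>r<length xs. zs ! r \<in> fanout A as t F (xs ! r))}"

definition unambiguous :: "scenario \<Rightarrow> 'a set \<Rightarrow> nat list \<Rightarrow> nat \<Rightarrow> nat \<Rightarrow> (nat \<Rightarrow> 'a list \<Rightarrow> 'a list)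
    \<Rightarrow> 'a list list list set \<Rightarrow> bool" where
  "unambiguous sc A as t i F C \<longleftrightarrow> C \<noteq> {} \<and>
     (\<forall>xs\<in>C. length xs = i \<and> (\<forall>r<i. valid_input A as (xs ! r))) \<and>
     (\<forall>xs\<in>C. \<forall>xs'\<in>C. xs \<noteq> xs' \<longrightarrow>
        fanout_multi sc A as t F xs \<inter> fanout_multi sc A as t F xs' = {})"

definition capacity :: "scenario \<Rightarrow> 'a set \<Rightarrow> nat list \<Rightarrow> nat list \<Rightarrow> nat \<Rightarrow> nat \<Rightarrow> real" where
  "capacity sc A as bs t i = Sup {log (real (card A)) (real (card C)) / real i | F C.
      network_code A as bs F \<and> unambiguous sc A as t i F C}"

end

theory Submission
  imports Defs
begin

text \<open>Upper bound: if two codewords induce the same outputs of the second intermediate node in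
  every round, the adversary (with one fixed edge set per codeword, as Scenario A.1 demands) can make
  the first node see the same word for both, namely the first \<open>t\<close> symbols of one codeword followed
  by the last \<open>t\<close> symbols of the other. So an unambiguous code injects into the \<open>i\<close>-tuples of
  outputs of the second node, and has at most \<open>|A|^i\<close> codewords.

  Lower bound: send every symbol \<open>a\<close> on all \<open>4t\<close> edges, and let each intermediate node output the
  least symbol, for a fixed ranking of the alphabet, that it receives at least \<open>t\<close> times. Of the two
  nodes, one sees fewer than \<open>t\<close> corrupted edges and outputs \<open>a\<close>; the other still receives \<open>a\<close> at
  least \<open>t\<close> times, so its output ranks at most as high as \<open>a\<close>. Two distinct symbols can therefore
  never produce the same pair of outputs, and the \<open>i\<close>-fold repetition of this one-shot code is
  unambiguous even in Scenario A.2.\<close>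

lemma fanout_multi_A1_subset_A2: "fanout_multi A1 A as t F xs \<subseteq> fanout_multi A2 A as t F xs"
proof
  fix zs assume "zs \<in> fanout_multi A1 A as t F xs"
  then obtain ys W where zs: "zs = map (terminal_output as F) ys" "length ys = length xs"
    and W: "W \<subseteq> source_edges as" "card W \<le> t"
    and ys: "\<forall>r<length xs. valid_input A as (ys ! r) \<and> agrees_off as W (xs ! r) (ys ! r)"
    by auto
  have "zs ! r \<in> fanout A as t F (xs ! r)" if "r < length xs" for r
    unfolding fanout_def using that zs W ys by (auto intro!: exI[of _ "ys ! r"] exI[of _ W])
  then show "zs \<in> fanout_multi A2 A as t F xs"
    using zs by simp
qed

lemma unambiguous_A2_imp_A1: "unambiguous A2 A as t i F C \<Longrightarrow> unambiguous A1 A as t i F C"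
  unfolding unambiguous_def using fanout_multi_A1_subset_A2 by blast

lemma unambiguous_A2_lists:
  assumes "D \<noteq> {}" and valid: "\<And>x. x \<in> D \<Longrightarrow> valid_input A as x"
    and disj: "\<And>x x'. x \<in> D \<Longrightarrow> x' \<in> D \<Longrightarrow> x \<noteq> x' \<Longrightarrow> fanout A as t F x \<inter> fanout A as t F x' = {}"
  shows "unambiguous A2 A as t i F {xs. set xs \<subseteq> D \<and> length xs = i}"
proof -
  let ?C = "{xs. set xs \<subseteq> D \<and> length xs = i}"
  obtain d where "d \<in> D"
    using assms(1) by blast
  then have "replicate i d \<in> ?C"
    by auto
  moreover have "\<forall>xs\<in>?C. length xs = i \<and> (\<forall>r<i. valid_input A as (xs ! r))"
    using valid nth_mem by blast
  moreover have "fanout_multi A2 A as t F xs \<inter> fanout_multi A2 A as t F xs' = {}"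
    if xs: "xs \<in> ?C" and xs': "xs' \<in> ?C" and "xs \<noteq> xs'" for xs xs'
  proof -
    obtain r where r: "r < i" "xs ! r \<noteq> xs' ! r"
      using xs xs' \<open>xs \<noteq> xs'\<close> nth_equalityI[of xs xs'] by auto
    have "fanout A as t F (xs ! r) \<inter> fanout A as t F (xs' ! r) = {}"
      using xs xs' r by (intro disj) (auto intro: nth_mem)
    then show ?thesis
      using xs xs' r(1) by auto
  qed
  ultimately show ?thesis
    unfolding unambiguous_def by blast
qed

lemma capacity_eqI:
  assumes "card A \<ge> 2" "i \<ge> 1"
    and "network_code A as bs F\<^sub>0" "unambiguous sc A as t i F\<^sub>0 C\<^sub>0" "card C\<^sub>0 = card A ^ i"
    and upper: "\<And>F C. network_code A as bs F \<Longrightarrow> unambiguous sc A as t i F C \<Longrightarrow> card C \<le> card A ^ i"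
  shows "capacity sc A as bs t i = 1"
  unfolding capacity_def
proof (rule cSup_eq_maximum)
  have "log (card A) (card C\<^sub>0) / i = 1"
    using assms(1,2,5) by simp
  then show "1 \<in> {log (card A) (card C) / i |F C. network_code A as bs F \<and> unambiguous sc A as t i F C}"
    using assms(3,4) by (metis (mono_tags, lifting) mem_Collect_eq)
next
  fix x assume "x \<in> {log (card A) (card C) / i |F C. network_code A as bs F \<and> unambiguous sc A as t i F C}"
  then obtain F C where "x = log (card A) (card C) / i"
    and "network_code A as bs F" "unambiguous sc A as t i F C"
    by blast
  moreover from upper[OF this(2,3)] have "log (card A) (card C) \<le> i"
    using assms(1) by (cases "card C = 0") (simp add: log_def, simp add: log_of_power_le)
  ultimately show "x \<le> 1"
    using assms(2) by simp
qed

lemma finite_source_edges: "finite (source_edges as)"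
proof -
  have "source_edges as = (SIGMA j:{..<length as}. {..<as ! j})"
    unfolding source_edges_def by auto
  then show ?thesis
    by auto
qed

lemma card_source_edges_slice_le:
  assumes "finite S" shows "card (source_edges as \<inter> {j} \<times> S) \<le> card S"
proof -
  have "card (source_edges as \<inter> {j} \<times> S) \<le> card ({j} \<times> S)"
    using assms by (intro card_mono) auto
  then show ?thesis by (simp add: card_cartesian_product)
qed

lemma card_node_slices_le:
  assumes "finite W"
  shows "card {k. (0::nat, k) \<in> W} + card {k. (1, k) \<in> W} \<le> card W"
proof -
  have fin: "finite (Pair j ` {k. (j, k) \<in> W})" for j
    using assms by (rule finite_subset[rotated]) auto
  have "card {k. (0::nat, k) \<in> W} + card {k. (1, k) \<in> W} =
      card (Pair (0::nat) ` {k. (0, k) \<in> W} \<union> Pair 1 ` {k. (1, k) \<in> W})"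
    using fin by (subst card_Un_disjoint) (auto simp: card_image inj_on_def)
  also have "\<dots> \<le> card W"
    using assms by (intro card_mono) auto
  finally show ?thesis .
qed

lemma valid_input_two_nodes:
  "valid_input A [a0, a1] x \<longleftrightarrow> length x = 2 \<and>
     length (x ! 0) = a0 \<and> set (x ! 0) \<subseteq> A \<and> length (x ! 1) = a1 \<and> set (x ! 1) \<subseteq> A"
  unfolding valid_input_def by (auto simp: All_less_Suc numeral_2_eq_2)

lemma network_code_two_nodes:
  "network_code A [a0, a1] [b0, b1] F \<longleftrightarrow>
     (\<forall>y. length y = a0 \<and> set y \<subseteq> A \<longrightarrow> length (F 0 y) = b0 \<and> set (F 0 y) \<subseteq> A) \<and>
     (\<forall>y. length y = a1 \<and> set y \<subseteq> A \<longrightarrow> length (F 1 y) = b1 \<and> set (F 1 y) \<subseteq> A)"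
  unfolding network_code_def by (simp add: All_less_Suc conj_commute)

lemma source_edges_two_nodes:
  "source_edges [a0, a1] = {0} \<times> {..<a0} \<union> {1} \<times> {..<a1}"
  unfolding source_edges_def by (auto simp: less_Suc_eq)

lemma terminal_output_two_nodes: "terminal_output [a0, a1] F y = [F 0 (y ! 0), F 1 (y ! 1)]"
  by (simp add: terminal_output_def upt_rec)

section \<open>Upper bound\<close>

lemma splice_first_node:
  assumes x: "valid_input A [a0, a1] x" and x': "valid_input A [a0, a1] x'" and "a0 \<le> 2 * t"
  defines "z \<equiv> take t (x' ! 0) @ drop t (x ! 0)"
  shows "valid_input A [a0, a1] [z, x ! 1]" and "valid_input A [a0, a1] [z, x' ! 1]"
    and "agrees_off [a0, a1] (source_edges [a0, a1] \<inter> {0} \<times> {..<t}) x [z, x ! 1]"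
    and "agrees_off [a0, a1] (source_edges [a0, a1] \<inter> {0} \<times> {t..<2 * t}) x' [z, x' ! 1]"
proof -
  have len: "length (x ! 0) = a0" "length (x' ! 0) = a0"
    using x x' by (simp_all add: valid_input_two_nodes)
  have "set z \<subseteq> A"
    using x x' set_take_subset[of t "x' ! 0"] set_drop_subset[of t "x ! 0"]
    by (auto simp: z_def valid_input_two_nodes)
  then show "valid_input A [a0, a1] [z, x ! 1]" "valid_input A [a0, a1] [z, x' ! 1]"
    using x x' by (auto simp: valid_input_two_nodes z_def)
  have "k < t" if "k < a0" "z ! k \<noteq> x ! 0 ! k" for k
    using that len by (cases "k < t") (simp_all add: z_def nth_append)
  then show "agrees_off [a0, a1] (source_edges [a0, a1] \<inter> {0} \<times> {..<t}) x [z, x ! 1]"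
    by (auto simp: agrees_off_def source_edges_two_nodes)
  have "t \<le> k" if "k < a0" "z ! k \<noteq> x' ! 0 ! k" for k
    using that len by (cases "k < t") (simp_all add: z_def nth_append)
  then show "agrees_off [a0, a1] (source_edges [a0, a1] \<inter> {0} \<times> {t..<2 * t}) x' [z, x' ! 1]"
    using \<open>a0 \<le> 2 * t\<close> by (auto simp: agrees_off_def source_edges_two_nodes)
qed

lemma fanout_multi_A1_meet:
  assumes "a0 \<le> 2 * t" and len: "length xs' = length xs"
    and valid: "\<And>r. r < length xs \<Longrightarrow> valid_input A [a0, a1] (xs ! r) \<and> valid_input A [a0, a1] (xs' ! r)"
    and agree: "\<And>r. r < length xs \<Longrightarrow> F 1 (xs ! r ! 1) = F 1 (xs' ! r ! 1)"
  shows "fanout_multi A1 A [a0, a1] t F xs \<inter> fanout_multi A1 A [a0, a1] t F xs' \<noteq> {}"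
proof -
  define z where "z r = take t (xs' ! r ! 0) @ drop t (xs ! r ! 0)" for r
  define ys where "ys = map (\<lambda>r. [z r, xs ! r ! 1]) [0..<length xs]"
  define ys' where "ys' = map (\<lambda>r. [z r, xs' ! r ! 1]) [0..<length xs]"
  define W where "W = source_edges [a0, a1] \<inter> {0} \<times> {..<t}"
  define W' where "W' = source_edges [a0, a1] \<inter> {0} \<times> {t..<2 * t}"
  have card: "card W \<le> t" "card W' \<le> t"
    using card_source_edges_slice_le[of "{..<t}"] card_source_edges_slice_le[of "{t..<2 * t}"]
    by (simp_all add: W_def W'_def)
  have rounds: "valid_input A [a0, a1] (ys ! r) \<and> agrees_off [a0, a1] W (xs ! r) (ys ! r) \<and>
      valid_input A [a0, a1] (ys' ! r) \<and> agrees_off [a0, a1] W' (xs' ! r) (ys' ! r)"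
    if "r < length xs" for r
    using splice_first_node[OF conjunct1[OF valid[OF that]] conjunct2[OF valid[OF that]] assms(1)] that
    by (simp add: ys_def ys'_def z_def W_def W'_def)
  have "map (terminal_output [a0, a1] F) ys \<in> fanout_multi A1 A [a0, a1] t F xs"
    using card rounds by (auto simp: ys_def W_def intro!: exI[of _ ys] exI[of _ W])
  moreover have "map (terminal_output [a0, a1] F) ys' \<in> fanout_multi A1 A [a0, a1] t F xs'"
    using len card rounds by (auto simp: ys'_def W'_def intro!: exI[of _ ys'] exI[of _ W'])
  moreover have "map (terminal_output [a0, a1] F) ys = map (terminal_output [a0, a1] F) ys'"
    using agree by (simp add: ys_def ys'_def terminal_output_two_nodes)
  ultimately show ?thesis by (metis disjoint_iff)
qed

lemma card_unambiguous_A1_le: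
  assumes "finite A" and "a0 \<le> 2 * t"
    and F: "network_code A [a0, a1] [b0, b1] F" and C: "unambiguous A1 A [a0, a1] t i F C"
  shows "finite C \<and> card C \<le> card A ^ (b1 * i)"
proof -
  define L where "L = {w. set w \<subseteq> A \<and> length w = b1}"
  define h where "h xs = map (\<lambda>x. F 1 (x ! 1)) xs" for xs :: "'a list list list"
  have len: "length xs = i" and valid: "\<And>r. r < i \<Longrightarrow> valid_input A [a0, a1] (xs ! r)"
    if "xs \<in> C" for xs
    using C that unfolding unambiguous_def by blast+
  have "h xs \<in> {ws. set ws \<subseteq> L \<and> length ws = i}" if "xs \<in> C" for xs
  proof -
    have "F 1 (x ! 1) \<in> L" if "x \<in> set xs" for x
    proof -
      have "valid_input A [a0, a1] x"
        using \<open>xs \<in> C\<close> \<open>x \<in> set xs\<close> len valid by (auto simp: in_set_conv_nth)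
      then show ?thesis
        using F by (simp add: L_def network_code_two_nodes valid_input_two_nodes)
    qed
    then show ?thesis
      using len \<open>xs \<in> C\<close> by (auto simp: h_def)
  qed
  then have img: "h ` C \<subseteq> {ws. set ws \<subseteq> L \<and> length ws = i}"
    by blast
  have inj: "inj_on h C"
  proof (rule inj_onI, rule ccontr)
    fix xs xs' assume "xs \<in> C" "xs' \<in> C" "h xs = h xs'" "xs \<noteq> xs'"
    have "F 1 (xs ! r ! 1) = F 1 (xs' ! r ! 1)" if "r < length xs" for r
    proof -
      have "h xs ! r = h xs' ! r"
        using \<open>h xs = h xs'\<close> by simp
      then show ?thesis
        using that len \<open>xs \<in> C\<close> \<open>xs' \<in> C\<close> by (simp add: h_def)
    qed
    then have "fanout_multi A1 A [a0, a1] t F xs \<inter> fanout_multi A1 A [a0, a1] t F xs' \<noteq> {}"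
      using len valid \<open>xs \<in> C\<close> \<open>xs' \<in> C\<close> \<open>a0 \<le> 2 * t\<close>
      by (intro fanout_multi_A1_meet) simp_all
    then show False
      using C \<open>xs \<in> C\<close> \<open>xs' \<in> C\<close> \<open>xs \<noteq> xs'\<close> unfolding unambiguous_def by blast
  qed
  have "finite L" "card L = card A ^ b1"
    using \<open>finite A\<close> by (simp_all add: L_def finite_lists_length_eq card_lists_length_eq)
  then have fin: "finite {ws. set ws \<subseteq> L \<and> length ws = i}"
    and card: "card {ws. set ws \<subseteq> L \<and> length ws = i} = card A ^ (b1 * i)"
    by (simp_all add: finite_lists_length_eq card_lists_length_eq power_mult)
  show ?thesis
    using inj_on_finite[OF inj img fin] card_inj_on_le[OF inj img fin] card by simp
qed

section \<open>Threshold decoding\<close>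

definition frequent_symbols :: "nat \<Rightarrow> 'a list \<Rightarrow> 'a set" where
  "frequent_symbols t y = {a \<in> set y. t \<le> count_list y a}"

text \<open>The fallback \<open>hd y\<close> is arbitrary: on words received from a repetition codeword through at
  most \<open>t\<close> corrupted edges some symbol always occurs at least \<open>t\<close> times.\<close>

definition threshold_decode :: "('a \<Rightarrow> nat) \<Rightarrow> nat \<Rightarrow> 'a list \<Rightarrow> 'a" where
  "threshold_decode rk t y =
     (if frequent_symbols t y = {} then hd y else arg_min_on rk (frequent_symbols t y))"

lemma finite_frequent_symbols: "finite (frequent_symbols t y)"
  unfolding frequent_symbols_def by simp

lemma threshold_decode_in_set: "y \<noteq> [] \<Longrightarrow> threshold_decode rk t y \<in> set y"
  using arg_min_if_finite(1)[OF finite_frequent_symbols, of t y rk]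
  by (auto simp: threshold_decode_def frequent_symbols_def)

lemma threshold_decode_rank_le:
  assumes "0 < t" and "t \<le> count_list y a"
  shows "rk (threshold_decode rk t y) \<le> rk a"
proof -
  have "a \<in> frequent_symbols t y"
    using assms count_list_0_iff[of y a] by (simp add: frequent_symbols_def)
  then show ?thesis
    using arg_min_least[OF finite_frequent_symbols, of t y a rk] by (auto simp: threshold_decode_def)
qed

lemma count_list_add_le_length: "a \<noteq> b \<Longrightarrow> count_list y a + count_list y b \<le> length y"
  by (induction y) auto

lemma threshold_decode_eq:
  assumes "length y \<le> 2 * t" and "t < count_list y a"
  shows "threshold_decode rk t y = a"
proof -
  have "b = a" if "t \<le> count_list y b" for b
    using that assms count_list_add_le_length[of a b y] by (cases "b = a") auto
  moreover have "a \<in> set y"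
    using assms(2) count_list_0_iff[of y a] by auto
  ultimately have "frequent_symbols t y = {a}"
    using assms(2) by (auto simp: frequent_symbols_def)
  then show ?thesis
    using arg_min_if_finite(1)[of "{a}" rk] by (simp add: threshold_decode_def)
qed

lemma count_list_ge_if_agrees:
  assumes "finite V" and "\<And>k. k < length y \<Longrightarrow> k \<notin> V \<Longrightarrow> y ! k = a"
  shows "length y - card V \<le> count_list y a"
proof -
  have "length y - card V \<le> card ({..<length y} - V)"
    using diff_card_le_card_Diff[OF assms(1)] by (metis card_lessThan)
  also have "\<dots> \<le> card {k. k < length y \<and> a = y ! k}"
    using assms(2) by (intro card_mono) auto
  also have "\<dots> = count_list y a"
    by (simp add: count_list_eq_length_filter length_filter_conv_card)
  finally show ?thesis .
qed

lemma threshold_decode_corrupted: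
  assumes "length y = 2 * t" and "finite V" and "\<And>k. k < length y \<Longrightarrow> k \<notin> V \<Longrightarrow> y ! k = a"
  shows "card V < t \<Longrightarrow> threshold_decode rk t y = a"
    and "card V \<le> t \<Longrightarrow> 0 < t \<Longrightarrow> rk (threshold_decode rk t y) \<le> rk a"
  using count_list_ge_if_agrees[OF assms(2,3)] assms(1)
  by (auto intro: threshold_decode_eq threshold_decode_rank_le)

section \<open>Repetition code\<close>

definition threshold_decoder :: "('a \<Rightarrow> nat) \<Rightarrow> nat \<Rightarrow> nat \<Rightarrow> 'a list \<Rightarrow> 'a list" where
  "threshold_decoder rk t j y = [threshold_decode rk t y]"

definition repetition_input :: "nat \<Rightarrow> 'a \<Rightarrow> 'a list list" where
  "repetition_input t a = [replicate (2 * t) a, replicate (2 * t) a]"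

lemma inj_repetition_input: "1 \<le> t \<Longrightarrow> inj (repetition_input t)"
  by (auto simp: inj_def repetition_input_def replicate_eq_replicate)

lemma network_code_threshold_decoder:
  assumes "1 \<le> t"
  shows "network_code A [2 * t, 2 * t] [1, 1] (threshold_decoder rk t)"
proof -
  have "threshold_decode rk t y \<in> A" if "length y = 2 * t" "set y \<subseteq> A" for y
  proof -
    have "y \<noteq> []"
      using that(1) assms by auto
    then show ?thesis
      using threshold_decode_in_set that(2) by blast
  qed
  then show ?thesis
    by (simp add: network_code_two_nodes threshold_decoder_def)
qed

lemma valid_repetition_input: "a \<in> A \<Longrightarrow> valid_input A [2 * t, 2 * t] (repetition_input t a)"
  by (simp add: valid_input_two_nodes repetition_input_def set_replicate_conv_if)

lemma repetition_input_agrees_off: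
  assumes "agrees_off [2 * t, 2 * t] W (repetition_input t a) y"
    and "j < 2" "k < 2 * t" "(j, k) \<notin> W"
  shows "y ! j ! k = a"
proof -
  have "(j, k) \<in> source_edges [2 * t, 2 * t] - W"
    using assms(2-4) by (auto simp: source_edges_two_nodes less_2_cases_iff)
  from bspec[OF assms(1)[unfolded agrees_off_def] this]
  have "y ! j ! k = repetition_input t a ! j ! k"
    by simp
  moreover have "repetition_input t a ! j = replicate (2 * t) a"
    using assms(2) by (cases j) (simp_all add: repetition_input_def)
  ultimately show ?thesis
    using assms(3) by simp
qed

lemma fanout_repetition_input:
  assumes "1 \<le> t"
    and "zs \<in> fanout A [2 * t, 2 * t] t (threshold_decoder rk t) (repetition_input t a)"
  obtains u v where "zs = [[u], [v]]" and "u = a \<and> rk v \<le> rk a \<or> v = a \<and> rk u \<le> rk a"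
proof -
  obtain y W where zs: "zs = terminal_output [2 * t, 2 * t] (threshold_decoder rk t) y"
    and y: "valid_input A [2 * t, 2 * t] y" and W: "W \<subseteq> source_edges [2 * t, 2 * t]" "card W \<le> t"
    and agree: "agrees_off [2 * t, 2 * t] W (repetition_input t a) y"
    using assms(2) unfolding fanout_def by blast
  define V where "V j = {k. (j, k) \<in> W}" for j
  have "V j \<subseteq> {..<2 * t}" for j
    using W(1) by (auto simp: V_def source_edges_two_nodes)
  then have finV: "finite (V j)" for j
    by (meson finite_lessThan finite_subset)
  have card_V: "card (V 0) + card (V 1) \<le> t"
    using card_node_slices_le[OF finite_subset[OF W(1) finite_source_edges]] W(2)
    by (simp add: V_def)
  have len: "length (y ! j) = 2 * t" if "j < 2" for j
    using y that by (auto simp: valid_input_two_nodes less_2_cases_iff)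
  have "y ! j ! k = a" if "j < 2" "k < length (y ! j)" "k \<notin> V j" for j k
    using repetition_input_agrees_off[OF agree] that len by (simp add: V_def)
  note decode = threshold_decode_corrupted[OF len finV this]
  have zs: "zs = [[threshold_decode rk t (y ! 0)], [threshold_decode rk t (y ! 1)]]"
    by (simp add: zs terminal_output_two_nodes threshold_decoder_def)
  have "card (V 0) \<le> t" "card (V 1) \<le> t"
    using card_V by linarith+
  show thesis
  proof (cases "card (V 0) < t")
    case True
    then have "threshold_decode rk t (y ! 0) = a"
      by (intro decode(1)) simp_all
    moreover have "rk (threshold_decode rk t (y ! 1)) \<le> rk a"
      using \<open>card (V 1) \<le> t\<close> assms(1) by (intro decode(2)) simp_all
    ultimately show thesis
      by (intro that[OF zs] disjI1 conjI)
  next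
    case False
    then have "card (V 1) < t"
      using card_V assms(1) by linarith
    then have "threshold_decode rk t (y ! 1) = a"
      by (intro decode(1)) simp_all
    moreover have "rk (threshold_decode rk t (y ! 0)) \<le> rk a"
      using \<open>card (V 0) \<le> t\<close> assms(1) by (intro decode(2)) simp_all
    ultimately show thesis
      by (intro that[OF zs] disjI2 conjI)
  qed
qed

lemma fanout_repetition_input_disjoint:
  assumes "inj_on rk A" "a \<in> A" "b \<in> A" "a \<noteq> b" "1 \<le> t"
  shows "fanout A [2 * t, 2 * t] t (threshold_decoder rk t) (repetition_input t a) \<inter>
         fanout A [2 * t, 2 * t] t (threshold_decoder rk t) (repetition_input t b) = {}"
proof (rule ccontr)
  assume "\<not> ?thesis"
  then obtain zs
    where "zs \<in> fanout A [2 * t, 2 * t] t (threshold_decoder rk t) (repetition_input t a)"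
      and "zs \<in> fanout A [2 * t, 2 * t] t (threshold_decoder rk t) (repetition_input t b)"
    by blast
  then obtain u v where "u = a \<and> rk v \<le> rk a \<or> v = a \<and> rk u \<le> rk a"
    and "u = b \<and> rk v \<le> rk b \<or> v = b \<and> rk u \<le> rk b"
    using fanout_repetition_input[OF \<open>1 \<le> t\<close>] by (metis list.inject)
  then have "rk a = rk b"
    using \<open>a \<noteq> b\<close> by auto
  then show False
    using inj_onD[OF assms(1)] assms(2-4) by blast
qed

lemma unambiguous_repetition_code:
  assumes "inj_on rk A" "A \<noteq> {}" "1 \<le> t"
  shows "unambiguous A2 A [2 * t, 2 * t] t i (threshold_decoder rk t)
           {xs. set xs \<subseteq> repetition_input t ` A \<and> length xs = i}"
proof (rule unambiguous_A2_lists)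
  fix x x' assume "x \<in> repetition_input t ` A" "x' \<in> repetition_input t ` A" "x \<noteq> x'"
  then show "fanout A [2 * t, 2 * t] t (threshold_decoder rk t) x \<inter>
      fanout A [2 * t, 2 * t] t (threshold_decoder rk t) x' = {}"
    using fanout_repetition_input_disjoint[OF assms(1) _ _ _ assms(3)] by blast
qed (use assms(2) in \<open>auto simp: valid_repetition_input\<close>)

lemma card_repetition_code:
  assumes "finite A" "1 \<le> t"
  shows "card {xs. set xs \<subseteq> repetition_input t ` A \<and> length xs = i} = card A ^ i"
proof -
  have "card (repetition_input t ` A) = card A"
    by (rule card_image, rule inj_on_subset[OF inj_repetition_input[OF assms(2)] subset_UNIV])
  then show ?thesis
    using assms(1) by (simp add: card_lists_length_eq)
qed

theorem proposition4p7:
  fixes A :: "'a set" and t i :: nat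
  assumes "t \<ge> 1" and "finite A" and "card A \<ge> 2" and "i \<ge> 1"
  shows "capacity A1 A [2 * t, 2 * t] [1, 1] t i = 1 \<and>
         capacity A2 A [2 * t, 2 * t] [1, 1] t i = 1"
proof -
  obtain rk :: "'a \<Rightarrow> nat" where rk: "inj_on rk A"
    using finite_imp_inj_to_nat_seg[OF \<open>finite A\<close>] by blast
  have "A \<noteq> {}"
    using \<open>card A \<ge> 2\<close> by auto
  note code = network_code_threshold_decoder[OF \<open>t \<ge> 1\<close>, of A rk]
    and unamb = unambiguous_repetition_code[OF rk \<open>A \<noteq> {}\<close> \<open>t \<ge> 1\<close>, of i]
    and card = card_repetition_code[OF \<open>finite A\<close> \<open>t \<ge> 1\<close>, of i]
  have upper: "card C \<le> card A ^ i"
    if "network_code A [2 * t, 2 * t] [1, 1] F" "unambiguous A1 A [2 * t, 2 * t] t i F C" for F C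
    using card_unambiguous_A1_le[OF \<open>finite A\<close> _ that] by simp
  have "capacity A1 A [2 * t, 2 * t] [1, 1] t i = 1"
    using code unambiguous_A2_imp_A1[OF unamb] card upper
    by (rule capacity_eqI[OF \<open>card A \<ge> 2\<close> \<open>i \<ge> 1\<close>])
  moreover have "capacity A2 A [2 * t, 2 * t] [1, 1] t i = 1"
    using code unamb card upper[OF _ unambiguous_A2_imp_A1]
    by (rule capacity_eqI[OF \<open>card A \<ge> 2\<close> \<open>i \<ge> 1\<close>])
  ultimately show ?thesis ..
qed

end
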